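(* Let $(A,\succ,\prec)$ be an anti-pre-Novikov algebra with associated Novikov algebra $(A,\circ)$, and let $s=\sum_i a_i\otimes b_i\in A\otimes A$ be skew-symmetric ($\tau(s)=-s$). The following are equivalent: (a) $s$ is a solution of the anti-pre-Novikov Yang–Baxter equation in $(A,\succ,\prec)$, i.e. $\sum_{i,j}a_i\circ a_j\otimes b_i\otimes b_j+\sum_{i,j}a_j\otimes a_i\otimes(b_i\odot b_j)+\sum_{i,j}a_i\otimes(b_i\prec a_j)\otimes b_j=0$; (b) $T_s$ is an $\mathcal O$-operator on $(A,\circ)$ associated to the representation $(A^*,-L_{\odot}^*,R_{\prec}^* )$; (c) $T_s$ is an $\mathcal O$-operator on $(A,\succ,\prec)$ associated to the representation $(A^*,-L_{\star}^*,-R_{\succ}^*,R_{\odot}^*,R_{\circ}^* )$.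
   Context: $A$ is finite-dimensional over a field $k$. An anti-pre-Novikov algebra is $(A,\succ,\prec)$ such that with $x\circ y=x\succ y+x\prec y$: $(x\circ y-y\circ x)\succ z=y\succ(x\succ z)-x\succ(y\succ z)$; $x\prec(y\circ z)=(y\succ x)\prec z-(x\prec y)\prec z-y\succ(x\prec z)$; $(x\circ y)\succ z=-(x\succ z)\prec y$; $(x\prec y)\prec z=(x\prec z)\prec y$; $(x\circ y-y\circ x)\prec z=x\succ(y\circ z)-y\succ(x\circ z)$; $(A,\circ)$ is then a Novikov algebra. Notation: $x\odot y=x\succ y+y\prec x$; $L_\ast(x)y=x\ast y$, $R_\ast(x)y=y\ast x$; $L_{\star}=L_{\circ}+R_{\circ}$, $L_{\odot}=L_{\succ}+R_{\prec}$, $R_{\odot}=R_{\succ}+L_{\prec}$; for $f:A\to\mathrm{End}(A)$, $\langle f^*(x)\zeta,y\rangle=-\langle\zeta,f(x)y\rangle$; $T_s:A^*\to A$, $\langle T_s(\zeta),\eta\rangle=\langle s,\zeta\otimes\eta\rangle$. An $\mathcal O$-operator on a Novikov algebra $(A,\circ)$ associated to a representation $(V,l,r)$ is a linear $T:V\to A$ with $T(u)\circ T(v)=T(l(T(u))v+r(T(v))u)$. An $\mathcal O$-operator on $(A,\succ,\prec)$ associated to a representation $(V,l_{\succ},r_{\succ},l_{\prec},r_{\prec})$ is a linear $T:V\to A$ with $T(u)\succ T(v)=T(l_{\succ}(T(u))v+r_{\succ}(T(v))u)$ and $T(u)\prec T(v)=T(l_{\prec}(T(u))v+r_{\prec}(T(v))u)$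 for all $u,v\in V$. (The tuples in (b),(c) are representations of $(A,\circ)$ and $(A,\succ,\prec)$ respectively.) *)

theory Defs
  imports Main "HOL-Library.Function_Algebras"
begin

text \<open>Coordinate model: a finite-dimensional vector space over the field 'k is
  modelled as 'n \<Rightarrow> 'k for a finite (index) type 'n (a basis).  The dual space
  A* is again 'n \<Rightarrow> 'k, with the natural pairing.  Tensors in A\<otimes>A
  (resp. A\<otimes>A\<otimes>A) are 'n \<Rightarrow> 'n \<Rightarrow> 'k (resp. with three indices).\<close>

type_synonym ('k, 'n) vsp = "'n \<Rightarrow> 'k"
type_synonym ('k, 'n) binop = "('k,'n) vsp \<Rightarrow> ('k,'n) vsp \<Rightarrow> ('k,'n) vsp"

definition smul :: "'k::field \<Rightarrow> ('k,'n) vsp \<Rightarrow> ('k,'n) vsp" where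
  "smul c x = (\<lambda>p. c * x p)"

definition bilinear_op :: "('k::field,'n) binop \<Rightarrow> bool" where
  "bilinear_op m \<longleftrightarrow>
     (\<forall>x y z. m (x + y) z = m x z + m y z \<and> m x (y + z) = m x y + m x z) \<and>
     (\<forall>c x y. m (smul c x) y = smul c (m x y) \<and> m x (smul c y) = smul c (m x y))"

definition circ_op :: "('k::field,'n) binop \<Rightarrow> ('k,'n) binop \<Rightarrow> ('k,'n) binop" where
  "circ_op sc pr x y = sc x y + pr x y"

definition anti_pre_Novikov :: "('k::field,'n) binop \<Rightarrow> ('k,'n) binop \<Rightarrow> bool" where
  "anti_pre_Novikov sc pr \<longleftrightarrow> bilinear_op sc \<and> bilinear_op pr \<and>
    (let ci = circ_op sc pr in
     (\<forall>x y z. sc (ci x y - ci y x) z = sc y (sc x z) - sc x (sc y z)) \<and>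
     (\<forall>x y z. pr x (ci y z) = pr (sc y x) z - pr (pr x y) z - sc y (pr x z)) \<and>
     (\<forall>x y z. sc (ci x y) z = - pr (sc x z) y) \<and>
     (\<forall>x y z. pr (pr x y) z = pr (pr x z) y) \<and>
     (\<forall>x y z. pr (ci x y - ci y x) z = sc x (ci y z) - sc y (ci x z)))"

definition odot_op :: "('k::field,'n) binop \<Rightarrow> ('k,'n) binop \<Rightarrow> ('k,'n) binop" where
  "odot_op sc pr x y = sc x y + pr y x"

definition pair :: "('k::field,'n::finite) vsp \<Rightarrow> ('k,'n) vsp \<Rightarrow> 'k" where
  "pair \<zeta> y = (\<Sum>p\<in>UNIV. \<zeta> p * y p)"

definition unitv :: "'n \<Rightarrow> ('k::field,'n) vsp" where
  "unitv q = (\<lambda>p. if p = q then 1 else 0)"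

text \<open>For f : A \<rightarrow> End(A) (given as f x y = f(x) y), the map f* : A \<rightarrow> End(A*)
  with <f*(x) \<zeta>, y> = - <\<zeta>, f(x) y>.\<close>
definition dual_map :: "('k::field,'n::finite) binop \<Rightarrow> ('k,'n) binop" where
  "dual_map f x \<zeta> = (\<lambda>q. - pair \<zeta> (f x (unitv q)))"

definition L_of :: "('k::field,'n) binop \<Rightarrow> ('k,'n) binop" where
  "L_of m x y = m x y"
definition R_of :: "('k::field,'n) binop \<Rightarrow> ('k,'n) binop" where
  "R_of m x y = m y x"

definition tensor2 :: "(('k::field,'n) vsp \<times> ('k,'n) vsp) list \<Rightarrow> 'n \<Rightarrow> 'n \<Rightarrow> 'k" where
  "tensor2 ss = (\<lambda>p q. \<Sum>(a,b)\<leftarrow>ss. a p * b q)"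

definition tens3 :: "('k::field,'n) vsp \<Rightarrow> ('k,'n) vsp \<Rightarrow> ('k,'n) vsp \<Rightarrow> 'n \<Rightarrow> 'n \<Rightarrow> 'n \<Rightarrow> 'k" where
  "tens3 x y z = (\<lambda>p q r. x p * y q * z r)"

definition skew_tensor :: "('n \<Rightarrow> 'n \<Rightarrow> 'k::field) \<Rightarrow> bool" where
  "skew_tensor s \<longleftrightarrow> (\<forall>p q. s q p = - s p q)"

definition T_of :: "('n::finite \<Rightarrow> 'n \<Rightarrow> 'k::field) \<Rightarrow> ('k,'n) vsp \<Rightarrow> ('k,'n) vsp" where
  "T_of s \<zeta> = (\<lambda>q. \<Sum>p\<in>UNIV. s p q * \<zeta> p)"

definition APN_YBE :: "('k::field,'n) binop \<Rightarrow> ('k,'n) binop \<Rightarrow> (('k,'n) vsp \<times> ('k,'n) vsp) list \<Rightarrow> bool" where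
  "APN_YBE sc pr ss \<longleftrightarrow>
     (\<lambda>p q r. (\<Sum>(a,b)\<leftarrow>ss. \<Sum>(a',b')\<leftarrow>ss. tens3 (circ_op sc pr a a') b b' p q r)
            + (\<Sum>(a,b)\<leftarrow>ss. \<Sum>(a',b')\<leftarrow>ss. tens3 a' a (odot_op sc pr b b') p q r)
            + (\<Sum>(a,b)\<leftarrow>ss. \<Sum>(a',b')\<leftarrow>ss. tens3 a (pr b a') b' p q r)) = (\<lambda>p q r. 0)"

definition O_op_Nov :: "('k::field,'n) binop \<Rightarrow> (('k,'n) vsp \<Rightarrow> 'v \<Rightarrow> 'v) \<Rightarrow> (('k,'n) vsp \<Rightarrow> 'v \<Rightarrow> 'v)
     \<Rightarrow> ('v::plus \<Rightarrow> ('k,'n) vsp) \<Rightarrow> bool" where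
  "O_op_Nov ci l r T \<longleftrightarrow> (\<forall>u v. ci (T u) (T v) = T (l (T u) v + r (T v) u))"

definition O_op_APN :: "('k::field,'n) binop \<Rightarrow> ('k,'n) binop
     \<Rightarrow> (('k,'n) vsp \<Rightarrow> 'v \<Rightarrow> 'v) \<Rightarrow> (('k,'n) vsp \<Rightarrow> 'v \<Rightarrow> 'v)
     \<Rightarrow> (('k,'n) vsp \<Rightarrow> 'v \<Rightarrow> 'v) \<Rightarrow> (('k,'n) vsp \<Rightarrow> 'v \<Rightarrow> 'v)
     \<Rightarrow> ('v::plus \<Rightarrow> ('k,'n) vsp) \<Rightarrow> bool" where
  "O_op_APN sc pr lsc rsc lpr rpr T \<longleftrightarrow>
     (\<forall>u v. sc (T u) (T v) = T (lsc (T u) v + rsc (T v) u)) \<and>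
     (\<forall>u v. pr (T u) (T v) = T (lpr (T u) v + rpr (T v) u))"

end

(* Pair everything with the dual space.  Writing T = T_s, the left-hand side of the
   Yang-Baxter equation paired with xi (x) u (x) v is the trilinear form
     B(u, v, xi) = <xi, Tu o Tv> + <v, Tu odot Txi> - <u, Txi < Tv>.
   Skew-symmetry of s means <xi, T w> = - <w, T xi>, which turns the O-operator identity (b),
   paired with xi, into B(u, v, xi) = 0.  In the same way the two identities of (c) become
   B(xi, u, v) + B(u, xi, v) = 0 and B(u, v, xi) = B(xi, u, v) + B(u, xi, v), which together
   say again that B vanishes. *)
theory Submission
  imports Defs
begin

(* As simp rules these would be eta-contracted to e.g. x + y = (\<lambda>p. x p + y p), which
   destroys the vector-level terms that the linearity lemmas below rewrite. *)
declare plus_fun_apply [simp del] zero_fun_apply [simp del]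
  uminus_apply [simp del] minus_apply [simp del]

lemmas fun_arith_apply = plus_fun_apply zero_fun_apply uminus_apply minus_apply

lemma smul_apply: "smul c x p = c * x p"
  by (simp add: smul_def)

lemma smul_smul: "smul c (smul d x) = smul (c * d) x"
  by (simp add: smul_def mult.assoc)

lemma sum_apply: "sum f S p = (\<Sum>i\<in>S. f i p)"
  by (induction S rule: infinite_finite_induct) (simp_all add: fun_arith_apply)

lemma sum_list_apply: "(\<Sum>i\<leftarrow>xs. f i) p = (\<Sum>i\<leftarrow>xs. f i p)"
  by (induction xs) (simp_all add: fun_arith_apply)

lemma smul_sum_list: "smul c (\<Sum>j\<leftarrow>ys. h j) = (\<Sum>j\<leftarrow>ys. smul c (h j))"
  by (rule ext) (simp add: smul_def sum_list_apply sum_list_const_mult)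

lemma unitv_expansion: "x = (\<Sum>q\<in>UNIV. smul (x q) (unitv q))"
  for x :: "('k::field, 'n::finite) vsp"
  by (rule ext) (simp add: sum_apply smul_apply fun_arith_apply unitv_def if_distrib cong: if_cong)

lemma linear_functional_expansion:
  fixes f :: "('k::field, 'n::finite) vsp \<Rightarrow> 'k"
  assumes add: "\<And>x y. f (x + y) = f x + f y" and smul: "\<And>c x. f (smul c x) = c * f x"
  shows "f x = (\<Sum>q\<in>UNIV. x q * f (unitv q))"
proof -
  have zero: "f 0 = 0"
    using add[of 0 0] by (metis add_0 add_cancel_right_right)
  have "f (\<Sum>q\<in>S. smul (x q) (unitv q)) = (\<Sum>q\<in>S. x q * f (unitv q))" if "finite S" for S
    using that by (induction S rule: finite_induct) (simp_all add: add smul zero)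
  then show ?thesis
    by (subst unitv_expansion) simp
qed

lemma linear_functional_eq_0:
  fixes f :: "('k::field, 'n::finite) vsp \<Rightarrow> 'k"
  assumes "\<And>x y. f (x + y) = f x + f y" and "\<And>c x. f (smul c x) = c * f x"
    and "\<And>q. f (unitv q) = 0"
  shows "f x = 0"
  by (subst linear_functional_expansion[OF assms(1,2)]) (simp add: assms(3))

lemma bilinear_op_add_left: "bilinear_op m \<Longrightarrow> m (x + y) z = m x z + m y z"
  and bilinear_op_add_right: "bilinear_op m \<Longrightarrow> m x (y + z) = m x y + m x z"
  and bilinear_op_smul_left: "bilinear_op m \<Longrightarrow> m (smul c x) y = smul c (m x y)"
  and bilinear_op_smul_right: "bilinear_op m \<Longrightarrow> m x (smul c y) = smul c (m x y)"
  by (simp_all add: bilinear_op_def)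

lemma bilinear_op_zero_left: "bilinear_op m \<Longrightarrow> m 0 y = 0"
  using bilinear_op_add_left[of m 0 0 y] by simp

lemma bilinear_op_zero_right: "bilinear_op m \<Longrightarrow> m y 0 = 0"
  using bilinear_op_add_right[of m y 0 0] by simp

lemma bilinear_op_minus_left: "bilinear_op m \<Longrightarrow> m (- x) y = - m x y"
  using bilinear_op_add_left[of m x "- x" y] bilinear_op_zero_left[of m y]
  by (simp add: eq_neg_iff_add_eq_0 add.commute)

lemma bilinear_op_minus_right: "bilinear_op m \<Longrightarrow> m y (- x) = - m y x"
  using bilinear_op_add_right[of m y x "- x"] bilinear_op_zero_right[of m y]
  by (simp add: eq_neg_iff_add_eq_0 add.commute)

lemma bilinear_op_sum_list_left:
  "bilinear_op m \<Longrightarrow> m (\<Sum>i\<leftarrow>xs. smul (f i) (a i)) y = (\<Sum>i\<leftarrow>xs. smul (f i) (m (a i) y))"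
  by (induction xs) (simp_all only: list.map sum_list.Nil sum_list.Cons bilinear_op_zero_left
      bilinear_op_add_left bilinear_op_smul_left)

lemma bilinear_op_sum_list_right:
  "bilinear_op m \<Longrightarrow> m x (\<Sum>j\<leftarrow>ys. smul (g j) (b j)) = (\<Sum>j\<leftarrow>ys. smul (g j) (m x (b j)))"
  by (induction ys) (simp_all only: list.map sum_list.Nil sum_list.Cons bilinear_op_zero_right
      bilinear_op_add_right bilinear_op_smul_right)

lemma bilinear_op_sum_list_smul:
  "bilinear_op m \<Longrightarrow> m (\<Sum>i\<leftarrow>xs. smul (f i) (a i)) (\<Sum>j\<leftarrow>ys. smul (g j) (b j))
     = (\<Sum>i\<leftarrow>xs. \<Sum>j\<leftarrow>ys. smul (f i * g j) (m (a i) (b j)))"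
  by (simp only: bilinear_op_sum_list_left bilinear_op_sum_list_right smul_sum_list smul_smul)

lemma bilinear_op_plus:
  "bilinear_op m \<Longrightarrow> bilinear_op m' \<Longrightarrow> bilinear_op (\<lambda>a b. m a b + m' a b)"
  by (simp add: bilinear_op_def smul_def fun_eq_iff fun_arith_apply algebra_simps)

lemma bilinear_op_L_of: "bilinear_op m \<Longrightarrow> bilinear_op (L_of m)"
  by (simp add: bilinear_op_def L_of_def)

lemma bilinear_op_R_of: "bilinear_op m \<Longrightarrow> bilinear_op (R_of m)"
  by (simp add: bilinear_op_def R_of_def)

lemma bilinear_op_circ_op: "bilinear_op sc \<Longrightarrow> bilinear_op pr \<Longrightarrow> bilinear_op (circ_op sc pr)"
  using bilinear_op_plus[of sc pr] by (simp add: circ_op_def [abs_def])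

lemma bilinear_op_odot_op: "bilinear_op sc \<Longrightarrow> bilinear_op pr \<Longrightarrow> bilinear_op (odot_op sc pr)"
  using bilinear_op_plus[OF _ bilinear_op_R_of, of sc pr]
  by (simp add: odot_op_def [abs_def] R_of_def)

lemma pair_unitv_left [simp]: "pair (unitv q) x = x q"
  by (simp add: pair_def unitv_def if_distrib [where f = "\<lambda>c. c * _"] cong: if_cong)

lemma pair_add_left: "pair (x + y) z = pair x z + pair y z"
  and pair_add_right: "pair z (x + y) = pair z x + pair z y"
  and pair_minus_right: "pair z (- x) = - pair z x"
  and pair_smul_left: "pair (smul c x) z = c * pair x z"
  and pair_smul_right: "pair z (smul c x) = c * pair z x"
  by (simp_all add: pair_def smul_apply fun_arith_apply algebra_simps sum.distrib sum_negf
      sum_distrib_left)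

lemma vsp_eq_iff_pair: "x = y \<longleftrightarrow> (\<forall>\<xi>. pair \<xi> x = pair \<xi> y)"
  by (metis ext pair_unitv_left)

lemma pair_dual_map:
  assumes "bilinear_op m"
  shows "pair (dual_map m x \<zeta>) y = - pair \<zeta> (m x y)"
proof -
  have "pair \<zeta> (m x y) = (\<Sum>q\<in>UNIV. y q * pair \<zeta> (m x (unitv q)))"
    by (rule linear_functional_expansion)
      (simp_all add: pair_add_right pair_smul_right bilinear_op_add_right[OF assms]
        bilinear_op_smul_right[OF assms])
  then show ?thesis
    by (simp add: dual_map_def pair_def sum_negf mult.commute)
qed

lemma T_of_add: "T_of s (u + v) = T_of s u + T_of s v"
  and T_of_minus: "T_of s (- u) = - T_of s u"
  and T_of_smul: "T_of s (smul c u) = smul c (T_of s u)"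
  by (simp_all add: T_of_def fun_eq_iff smul_apply fun_arith_apply algebra_simps sum.distrib
      sum_negf sum_distrib_left)

lemma pair_T_of_skew:
  assumes "skew_tensor s"
  shows "pair \<xi> (T_of s w) = - pair w (T_of s \<xi>)"
proof -
  have "pair \<xi> (T_of s w) = (\<Sum>q\<in>UNIV. \<Sum>p\<in>UNIV. \<xi> q * s p q * w p)"
    by (simp add: pair_def T_of_def sum_distrib_left mult.assoc)
  also have "\<dots> = (\<Sum>p\<in>UNIV. \<Sum>q\<in>UNIV. \<xi> q * s p q * w p)"
    by (rule sum.swap)
  also have "\<dots> = (\<Sum>p\<in>UNIV. \<Sum>q\<in>UNIV. - (w p * (s q p * \<xi> q)))"
  proof (intro sum.cong refl)
    fix p q
    have "s p q = - s q p"
      using assms unfolding skew_tensor_def by blast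
    then show "\<xi> q * s p q * w p = - (w p * (s q p * \<xi> q))"
      by (simp add: mult_ac)
  qed
  also have "\<dots> = - pair w (T_of s \<xi>)"
    by (simp add: pair_def T_of_def sum_distrib_left sum_negf)
  finally show ?thesis .
qed

lemma pair_T_of_dual_map:
  assumes "skew_tensor s" and "bilinear_op m"
  shows "pair \<xi> (T_of s (dual_map m x v)) = pair v (m x (T_of s \<xi>))"
  by (subst pair_T_of_skew[OF assms(1)]) (simp add: pair_dual_map[OF assms(2)])

definition ybe_form ::
    "('k::field, 'n::finite) binop \<Rightarrow> ('k, 'n) binop \<Rightarrow> ('n \<Rightarrow> 'n \<Rightarrow> 'k)
      \<Rightarrow> ('k, 'n) vsp \<Rightarrow> ('k, 'n) vsp \<Rightarrow> ('k, 'n) vsp \<Rightarrow> 'k" where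
  "ybe_form sc pr s u v \<xi> =
     pair \<xi> (circ_op sc pr (T_of s u) (T_of s v)) + pair v (odot_op sc pr (T_of s u) (T_of s \<xi>))
       - pair u (pr (T_of s \<xi>) (T_of s v))"

lemma O_op_Nov_T_of_iff:
  assumes sc: "bilinear_op sc" and pr: "bilinear_op pr" and s: "skew_tensor s"
  shows "O_op_Nov (circ_op sc pr) (\<lambda>x. - dual_map (L_of (odot_op sc pr)) x)
           (dual_map (R_of pr)) (T_of s)
         \<longleftrightarrow> (\<forall>u v \<xi>. ybe_form sc pr s u v \<xi> = 0)"
proof -
  have "pair \<xi> (circ_op sc pr (T_of s u) (T_of s v))
      - pair \<xi> (T_of s (- dual_map (L_of (odot_op sc pr)) (T_of s u) v + dual_map (R_of pr) (T_of s v) u))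
      = ybe_form sc pr s u v \<xi>" for u v \<xi>
    using pair_T_of_dual_map[OF s bilinear_op_L_of[OF bilinear_op_odot_op[OF sc pr]]]
      pair_T_of_dual_map[OF s bilinear_op_R_of[OF pr]]
    by (simp only: T_of_add T_of_minus pair_add_right pair_minus_right L_of_def R_of_def)
      (simp add: ybe_form_def)
  then show ?thesis
    unfolding O_op_Nov_def uminus_apply vsp_eq_iff_pair eq_iff_diff_eq_0 [of "pair _ _"] by simp
qed

lemma O_op_APN_T_of_iff:
  assumes sc: "bilinear_op sc" and pr: "bilinear_op pr" and s: "skew_tensor s"
  shows "O_op_APN sc pr
           (\<lambda>x. - dual_map (\<lambda>a b. L_of (circ_op sc pr) a b + R_of (circ_op sc pr) a b) x)
           (\<lambda>x. - dual_map (R_of sc) x)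
           (dual_map (\<lambda>a b. R_of sc a b + L_of pr a b))
           (dual_map (R_of (circ_op sc pr)))
           (T_of s)
         \<longleftrightarrow> (\<forall>u v \<xi>. ybe_form sc pr s \<xi> u v + ybe_form sc pr s u \<xi> v = 0)
           \<and> (\<forall>u v \<xi>. ybe_form sc pr s u v \<xi> = ybe_form sc pr s \<xi> u v + ybe_form sc pr s u \<xi> v)"
proof -
  have ci: "bilinear_op (circ_op sc pr)"
    by (rule bilinear_op_circ_op[OF sc pr])
  have succ: "pair \<xi> (sc (T_of s u) (T_of s v))
      - pair \<xi> (T_of s (- dual_map (\<lambda>a b. L_of (circ_op sc pr) a b + R_of (circ_op sc pr) a b) (T_of s u) v
          + - dual_map (R_of sc) (T_of s v) u))
      = ybe_form sc pr s \<xi> u v + ybe_form sc pr s u \<xi> v" for u v \<xi>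
    using pair_T_of_dual_map[OF s bilinear_op_plus[OF bilinear_op_L_of[OF ci] bilinear_op_R_of[OF ci]]]
      pair_T_of_dual_map[OF s bilinear_op_R_of[OF sc]]
    by (simp only: T_of_add T_of_minus pair_add_right pair_minus_right L_of_def R_of_def)
      (simp add: ybe_form_def circ_op_def odot_op_def pair_add_right)
  have prec: "pair \<xi> (pr (T_of s u) (T_of s v))
      - pair \<xi> (T_of s (dual_map (\<lambda>a b. R_of sc a b + L_of pr a b) (T_of s u) v
          + dual_map (R_of (circ_op sc pr)) (T_of s v) u))
      = ybe_form sc pr s u v \<xi> - (ybe_form sc pr s \<xi> u v + ybe_form sc pr s u \<xi> v)" for u v \<xi>
    using pair_T_of_dual_map[OF s bilinear_op_plus[OF bilinear_op_R_of[OF sc] bilinear_op_L_of[OF pr]]]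
      pair_T_of_dual_map[OF s bilinear_op_R_of[OF ci]]
    by (simp only: T_of_add pair_add_right L_of_def R_of_def)
      (simp add: ybe_form_def circ_op_def odot_op_def pair_add_right)
  show ?thesis
    unfolding O_op_APN_def uminus_apply vsp_eq_iff_pair eq_iff_diff_eq_0 [of "pair _ _"] succ prec
    by simp
qed

lemma ybe_form_linear:
  assumes sc: "bilinear_op sc" and pr: "bilinear_op pr"
  shows "ybe_form sc pr s (x + y) v \<xi> = ybe_form sc pr s x v \<xi> + ybe_form sc pr s y v \<xi>"
    and "ybe_form sc pr s (smul c x) v \<xi> = c * ybe_form sc pr s x v \<xi>"
    and "ybe_form sc pr s u (x + y) \<xi> = ybe_form sc pr s u x \<xi> + ybe_form sc pr s u y \<xi>"
    and "ybe_form sc pr s u (smul c x) \<xi> = c * ybe_form sc pr s u x \<xi>"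
    and "ybe_form sc pr s u v (x + y) = ybe_form sc pr s u v x + ybe_form sc pr s u v y"
    and "ybe_form sc pr s u v (smul c x) = c * ybe_form sc pr s u v x"
proof -
  have ci: "bilinear_op (circ_op sc pr)" and od: "bilinear_op (odot_op sc pr)"
    by (simp_all add: bilinear_op_circ_op bilinear_op_odot_op sc pr)
  note linear = T_of_add T_of_smul pair_add_left pair_add_right pair_smul_left pair_smul_right
    bilinear_op_add_left[OF ci] bilinear_op_add_right[OF ci] bilinear_op_smul_left[OF ci]
    bilinear_op_smul_right[OF ci] bilinear_op_add_left[OF od] bilinear_op_add_right[OF od]
    bilinear_op_smul_left[OF od] bilinear_op_smul_right[OF od] bilinear_op_add_left[OF pr]
    bilinear_op_add_right[OF pr] bilinear_op_smul_left[OF pr] bilinear_op_smul_right[OF pr]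
  show "ybe_form sc pr s (x + y) v \<xi> = ybe_form sc pr s x v \<xi> + ybe_form sc pr s y v \<xi>"
    and "ybe_form sc pr s (smul c x) v \<xi> = c * ybe_form sc pr s x v \<xi>"
    and "ybe_form sc pr s u (x + y) \<xi> = ybe_form sc pr s u x \<xi> + ybe_form sc pr s u y \<xi>"
    and "ybe_form sc pr s u (smul c x) \<xi> = c * ybe_form sc pr s u x \<xi>"
    and "ybe_form sc pr s u v (x + y) = ybe_form sc pr s u v x + ybe_form sc pr s u v y"
    and "ybe_form sc pr s u v (smul c x) = c * ybe_form sc pr s u v x"
    by (simp_all only: ybe_form_def linear) (simp_all add: algebra_simps)
qed

lemma ybe_form_eq_0_iff_unitv:
  assumes "bilinear_op sc" and "bilinear_op pr"
  shows "(\<forall>u v \<xi>. ybe_form sc pr s u v \<xi> = 0)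
     \<longleftrightarrow> (\<forall>p q r. ybe_form sc pr s (unitv q) (unitv r) (unitv p) = 0)"
proof (intro iffI allI)
  fix u v \<xi>
  assume unitv3: "\<forall>p q r. ybe_form sc pr s (unitv q) (unitv r) (unitv p) = 0"
  note linear = ybe_form_linear[OF assms]
  have unitv2: "ybe_form sc pr s (unitv q) (unitv r) \<xi> = 0" for q r
    by (rule linear_functional_eq_0) (simp_all add: linear unitv3)
  have unitv1: "ybe_form sc pr s (unitv q) v \<xi> = 0" for q
    by (rule linear_functional_eq_0[where f = "\<lambda>v. ybe_form sc pr s (unitv q) v \<xi>"])
      (simp_all add: linear unitv2)
  show "ybe_form sc pr s u v \<xi> = 0"
    by (rule linear_functional_eq_0[where f = "\<lambda>u. ybe_form sc pr s u v \<xi>"])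
      (simp_all add: linear unitv1)
qed simp

lemma T_of_tensor2_unitv: "T_of (tensor2 ss) (unitv q) = (\<Sum>i\<leftarrow>ss. smul (fst i q) (snd i))"
  by (rule ext) (simp add: T_of_def tensor2_def unitv_def sum_list_apply smul_apply split_def
      if_distrib [where f = "\<lambda>c. _ * c"] cong: if_cong)

lemma T_of_tensor2_unitv_skew:
  assumes "skew_tensor (tensor2 ss)"
  shows "T_of (tensor2 ss) (unitv q) = - (\<Sum>i\<leftarrow>ss. smul (snd i q) (fst i))"
proof (rule ext)
  fix r
  have "tensor2 ss q r = - tensor2 ss r q"
    using assms unfolding skew_tensor_def by blast
  then show "T_of (tensor2 ss) (unitv q) r = (- (\<Sum>i\<leftarrow>ss. smul (snd i q) (fst i))) r"
    by (simp add: T_of_tensor2_unitv sum_list_apply smul_apply uminus_apply)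
      (simp add: tensor2_def split_def mult.commute)
qed

lemma APN_YBE_iff_ybe_form_unitv:
  assumes sc: "bilinear_op sc" and pr: "bilinear_op pr" and skew: "skew_tensor (tensor2 ss)"
  shows "APN_YBE sc pr ss \<longleftrightarrow> (\<forall>p q r. ybe_form sc pr (tensor2 ss) (unitv q) (unitv r) (unitv p) = 0)"
proof -
  let ?T = "\<lambda>q. T_of (tensor2 ss) (unitv q)"
  have ci: "bilinear_op (circ_op sc pr)" and od: "bilinear_op (odot_op sc pr)"
    by (simp_all add: bilinear_op_circ_op bilinear_op_odot_op sc pr)
  have circ: "(\<Sum>(a, b)\<leftarrow>ss. \<Sum>(a', b')\<leftarrow>ss. tens3 (circ_op sc pr a a') b b' p q r)
      = circ_op sc pr (?T q) (?T r) p" for p q r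
    by (simp add: bilinear_op_minus_left[OF ci] bilinear_op_minus_right[OF ci]
        T_of_tensor2_unitv_skew[OF skew] bilinear_op_sum_list_smul[OF ci]
        sum_list_apply smul_apply tens3_def split_def mult_ac)
  have odot: "(\<Sum>(a, b)\<leftarrow>ss. \<Sum>(a', b')\<leftarrow>ss. tens3 a' a (odot_op sc pr b b') p q r)
      = odot_op sc pr (?T q) (?T p) r" for p q r
    by (simp add: T_of_tensor2_unitv bilinear_op_sum_list_smul[OF od]
        sum_list_apply smul_apply tens3_def split_def mult_ac)
  have prec: "(\<Sum>(a, b)\<leftarrow>ss. \<Sum>(a', b')\<leftarrow>ss. tens3 a (pr b a') b' p q r)
      = - pr (?T p) (?T r) q" for p q r
    by (subst T_of_tensor2_unitv_skew[OF skew, of r])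
      (simp add: T_of_tensor2_unitv bilinear_op_minus_right[OF pr] bilinear_op_sum_list_smul[OF pr]
        sum_list_apply smul_apply uminus_apply tens3_def split_def mult_ac)
  show ?thesis
    unfolding APN_YBE_def fun_eq_iff circ odot prec by (simp add: ybe_form_def)
qed

theorem mainTheorem7:
  fixes sc pr :: "('k::field, 'n::finite) binop"
    and ss :: "(('k,'n) vsp \<times> ('k,'n) vsp) list"
  assumes "anti_pre_Novikov sc pr"
    and "skew_tensor (tensor2 ss)"
  shows "(APN_YBE sc pr ss \<longleftrightarrow>
           O_op_Nov (circ_op sc pr)
             (\<lambda>x. - dual_map (L_of (odot_op sc pr)) x)
             (dual_map (R_of pr))
             (T_of (tensor2 ss)))
       \<and> (O_op_Nov (circ_op sc pr)
             (\<lambda>x. - dual_map (L_of (odot_op sc pr)) x)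
             (dual_map (R_of pr))
             (T_of (tensor2 ss))
          \<longleftrightarrow>
          O_op_APN sc pr
             (\<lambda>x. - dual_map (\<lambda>a b. L_of (circ_op sc pr) a b + R_of (circ_op sc pr) a b) x)
             (\<lambda>x. - dual_map (R_of sc) x)
             (dual_map (\<lambda>a b. R_of sc a b + L_of pr a b))
             (dual_map (R_of (circ_op sc pr)))
             (T_of (tensor2 ss)))"
proof -
  have sc: "bilinear_op sc" and pr: "bilinear_op pr"
    using assms(1) by (simp_all add: anti_pre_Novikov_def)
  let ?B = "ybe_form sc pr (tensor2 ss)"
  have "(\<forall>u v \<xi>. ?B u v \<xi> = 0)
      \<longleftrightarrow> (\<forall>u v \<xi>. ?B \<xi> u v + ?B u \<xi> v = 0) \<and> (\<forall>u v \<xi>. ?B u v \<xi> = ?B \<xi> u v + ?B u \<xi> v)"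
  proof (intro iffI conjI allI)
    fix u v \<xi>
    assume "(\<forall>u v \<xi>. ?B \<xi> u v + ?B u \<xi> v = 0) \<and> (\<forall>u v \<xi>. ?B u v \<xi> = ?B \<xi> u v + ?B u \<xi> v)"
    then have "?B u v \<xi> = ?B \<xi> u v + ?B u \<xi> v" and "?B \<xi> u v + ?B u \<xi> v = 0"
      by blast+
    then show "?B u v \<xi> = 0"
      by simp
  qed simp_all
  then show ?thesis
    unfolding APN_YBE_iff_ybe_form_unitv[OF sc pr assms(2)] O_op_Nov_T_of_iff[OF sc pr assms(2)]
      O_op_APN_T_of_iff[OF sc pr assms(2)] ybe_form_eq_0_iff_unitv[OF sc pr, symmetric]
    by blast
qed

end
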